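(* Let $p>2$ be a prime, $K\in\{\mathbb Z_{(p)},\mathbb Z_p\}$, $F$ a field containing $K$, $G=\langle a\rangle\cong C_{p^2}$, $\Phi(x)=x^{p-1}+\dots+x+1$, and for $1\leq j\leq p-2$ let $U_j$ be the $KC_{p^2}$-submodule of $(KC_{p^2})^{2}$ generated by $\big((a-1)^{j+1}+\Phi(a),\,(a-1)^j\big)$ and $\big((a-1)\Phi(a^p),\,\Phi(a^p)\big)$. Let $f_j:C_{p^2}\to\widehat{U_j}$ be the cocycle with $f_j(a)=p^{-2}\Phi(a)\Phi(a^p)(1,0)+U_j$. Then $\mathrm{Crys}(C_{p^2};U_j;f_j)$ is torsion-free.
   Context: $FM=F\otimes_KM$, $\widehat M=FM/M$ with $g(x+M)=gx+M$; a $1$-cocycle is $T:G\to\widehat M$ with $T(gh)=gT(h)+T(g)$, determined for cyclic $G$ by $T(a)$ via $T(a^k)=(1+a+\dots+a^{k-1})T(a)$. $\mathrm{Crys}(G;M;T)=\{(g,x):g\in G,\ x\in FM,\ x+M=T(g)\}$ with $(g,x)(g',x')=(gg',g'x+x')$. *)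

theory Defs
  imports "HOL-Computational_Algebra.Polynomial" "HOL-Library.Product_Plus" "HOL-Algebra.Group"
begin

(* The group ring F C_q, C_q = <a>, is modelled as F[x]/(x^q - 1): elements are
   polynomials reduced modulo x^q - 1, with a = x.  Elements of (F C_q)^2 are pairs. *)

definition cg_mod :: "nat \<Rightarrow> 'f::field poly" where
  "cg_mod q = monom 1 q - 1"

definition red :: "nat \<Rightarrow> 'f::field poly \<Rightarrow> 'f poly" where
  "red q u = u mod cg_mod q"

definition cg_ring :: "nat \<Rightarrow> 'f::field poly set" where
  "cg_ring q = {u. red q u = u}"

definition cg_ringK :: "nat \<Rightarrow> 'f set \<Rightarrow> 'f::field poly set" where
  "cg_ringK q K = {u \<in> cg_ring q. \<forall>i. coeff u i \<in> K}"

definition pmul2 :: "nat \<Rightarrow> 'f::field poly \<Rightarrow> 'f poly \<times> 'f poly \<Rightarrow> 'f poly \<times> 'f poly" where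
  "pmul2 q r x = (red q (r * fst x), red q (r * snd x))"

definition psmult :: "'f::field \<Rightarrow> 'f poly \<times> 'f poly \<Rightarrow> 'f poly \<times> 'f poly" where
  "psmult c x = (smult c (fst x), smult c (snd x))"

definition act :: "nat \<Rightarrow> nat \<Rightarrow> 'f::field poly \<times> 'f poly \<Rightarrow> 'f poly \<times> 'f poly" where
  "act q k x = pmul2 q (monom 1 k) x"

(* Phi p m = 1 + a^m + ... + a^(m(p-1)); Phi(a) = Phi p 1, Phi(a^p) = Phi p p *)
definition Phi :: "nat \<Rightarrow> nat \<Rightarrow> 'f::field poly" where
  "Phi p m = (\<Sum>i<p. monom 1 (m * i))"

definition am1 :: "'f::field poly" where
  "am1 = [:-1, 1:]"

definition gen1 :: "nat \<Rightarrow> nat \<Rightarrow> 'f::field poly \<times> 'f poly" where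
  "gen1 p j = pmul2 (p^2) 1 (am1 ^ (j+1) + Phi p 1, am1 ^ j)"

definition gen2 :: "nat \<Rightarrow> 'f::field poly \<times> 'f poly" where
  "gen2 p = pmul2 (p^2) 1 (am1 * Phi p p, Phi p p)"

definition U_mod :: "nat \<Rightarrow> 'f set \<Rightarrow> nat \<Rightarrow> ('f::field poly \<times> 'f poly) set" where
  "U_mod p K j = {pmul2 (p^2) r1 (gen1 p j) + pmul2 (p^2) r2 (gen2 p) | r1 r2.
                   r1 \<in> cg_ringK (p^2) K \<and> r2 \<in> cg_ringK (p^2) K}"

(* FM = F \<otimes>_K M, realised as the F-linear span of M inside (F C_q)^2 *)
definition F_span :: "('f::field poly \<times> 'f poly) set \<Rightarrow> ('f poly \<times> 'f poly) set" where
  "F_span M = {x. \<exists>S c. finite S \<and> S \<subseteq> M \<and> x = (\<Sum>u\<in>S. psmult (c u) u)}"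

(* the coset x + M, an element of \<hat>M = FM/M *)
definition coset :: "('f::field poly \<times> 'f poly) set \<Rightarrow> 'f poly \<times> 'f poly \<Rightarrow> ('f poly \<times> 'f poly) set" where
  "coset M x = (\<lambda>u. x + u) ` M"

(* the cocycle f_j : C_{p^2} \<rightarrow> \<hat>U_j, indexed by the exponent k (g = a^k, k < p^2),
   f_j(a^k) = (1 + a + ... + a^(k-1)) f_j(a),  f_j(a) = p^(-2) Phi(a) Phi(a^p) (1,0) + U_j *)
definition fj_cocycle :: "nat \<Rightarrow> 'f set \<Rightarrow> nat \<Rightarrow> nat \<Rightarrow> ('f::field_char_0 poly \<times> 'f poly) set" where
  "fj_cocycle p K j k =
     coset (U_mod p K j)
       (pmul2 (p^2) (\<Sum>i<k. monom 1 i)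
          (psmult (1 / of_nat (p^2)) (red (p^2) (Phi p 1 * Phi p p), 0)))"

(* Crys(C_q; M; T) with g = a^k represented by k < q *)
definition Crys :: "nat \<Rightarrow> ('f::field poly \<times> 'f poly) set \<Rightarrow> (nat \<Rightarrow> ('f poly \<times> 'f poly) set)
                     \<Rightarrow> (nat \<times> ('f poly \<times> 'f poly)) monoid" where
  "Crys q M T = \<lparr> carrier = {(k, x). k < q \<and> x \<in> F_span M \<and> coset M x = T k},
                  mult = (\<lambda>(g, x) (g', x'). ((g + g') mod q, act q g' x + x')),
                  one = (0, (0, 0)) \<rparr>"

definition torsion_free :: "'a monoid \<Rightarrow> bool" where
  "torsion_free G \<longleftrightarrow> (\<forall>z \<in> carrier G. \<forall>n::nat. n > 0 \<longrightarrow> z [^]\<^bsub>G\<^esub> n = \<one>\<^bsub>G\<^esub> \<longrightarrow> z = \<one>\<^bsub>G\<^esub>)"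

definition Zloc :: "nat \<Rightarrow> 'f::field_char_0 set" where
  "Zloc p = {of_int a / of_int b | a b. \<not> int p dvd b}"

definition padic_ints :: "nat \<Rightarrow> (nat \<Rightarrow> int) set" where
  "padic_ints p = {x. \<forall>n. 0 \<le> x n \<and> x n < int p ^ n \<and> x (Suc n) mod int p ^ n = x n}"

definition padd :: "nat \<Rightarrow> (nat \<Rightarrow> int) \<Rightarrow> (nat \<Rightarrow> int) \<Rightarrow> nat \<Rightarrow> int" where
  "padd p x y = (\<lambda>n. (x n + y n) mod int p ^ n)"

definition pmult :: "nat \<Rightarrow> (nat \<Rightarrow> int) \<Rightarrow> (nat \<Rightarrow> int) \<Rightarrow> nat \<Rightarrow> int" where
  "pmult p x y = (\<lambda>n. (x n * y n) mod int p ^ n)"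

definition pone :: "nat \<Rightarrow> nat \<Rightarrow> int" where
  "pone p = (\<lambda>n. 1 mod int p ^ n)"

definition is_Zp_in :: "nat \<Rightarrow> 'f::field set \<Rightarrow> bool" where
  "is_Zp_in p K \<longleftrightarrow> (\<exists>\<iota>. inj_on \<iota> (padic_ints p) \<and> \<iota> ` padic_ints p = K \<and> \<iota> (pone p) = 1 \<and>
      (\<forall>x\<in>padic_ints p. \<forall>y\<in>padic_ints p.
          \<iota> (padd p x y) = \<iota> x + \<iota> y \<and> \<iota> (pmult p x y) = \<iota> x * \<iota> y))"

end

(* Let (a^k, x) be a torsion element.  Its n-th power has translation part S x with
   S = 1 + a^k + ... + a^(k(n-1)), so S x = 0 in F C_(p^2).  Evaluating the first coordinate
   at a = 1 gives k = p r1(1) for some r1 in K[x]: the cocycle value contributes k because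
   Phi(1) Phi(1) / p^2 = 1, and the module U_j contributes p r1(1).  As p is not a unit in K,
   k = p t with t < p.  If t > 0, then a^k acts trivially modulo a^p - 1, where Phi(a^p)
   becomes p, so the second coordinate yields (a - 1)^j r1 + p r2 = 0 modulo a^p - 1.
   Writing a^p - 1 = (a - 1)^p + p c with c in K[x] and cancelling (a - 1)^j then shows
   r1(1) in pK, i.e. p divides t, which is absurd.  So k = 0, and then n x = 0 forces x = 0. *)

theory Submission
  imports Defs "HOL-Number_Theory.Cong"
begin

section \<open>Polynomials over a subring\<close>

definition is_subring :: "'a::comm_ring_1 set \<Rightarrow> bool" where
  "is_subring K \<longleftrightarrow> 1 \<in> K \<and> (\<forall>a\<in>K. \<forall>b\<in>K. a - b \<in> K \<and> a * b \<in> K)"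

definition polys_over :: "'a::zero set \<Rightarrow> 'a poly set" where
  "polys_over K = {f. \<forall>i. coeff f i \<in> K}"

context
  fixes K :: "'a::comm_ring_1 set"
  assumes K: "is_subring K"
begin

lemma subring_1: "1 \<in> K"
  and subring_diff: "a \<in> K \<Longrightarrow> b \<in> K \<Longrightarrow> a - b \<in> K"
  and subring_mult: "a \<in> K \<Longrightarrow> b \<in> K \<Longrightarrow> a * b \<in> K"
  using K by (auto simp: is_subring_def)

lemma subring_0: "0 \<in> K"
  using subring_diff[OF subring_1 subring_1] by simp

lemma subring_uminus: "a \<in> K \<Longrightarrow> - a \<in> K"
  using subring_diff[OF subring_0] by fastforce

lemma subring_add: "a \<in> K \<Longrightarrow> b \<in> K \<Longrightarrow> a + b \<in> K"
  using subring_diff[of a "- b"] subring_uminus by fastforce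

lemma subring_sum: "(\<And>i. i \<in> A \<Longrightarrow> f i \<in> K) \<Longrightarrow> sum f A \<in> K"
  by (induction A rule: infinite_finite_induct) (auto intro: subring_add subring_0)

lemma subring_of_nat: "of_nat n \<in> K"
  by (induction n) (auto intro: subring_add subring_0 subring_1)

lemma subring_of_int: "of_int z \<in> K"
  by (cases z rule: int_cases2) (auto intro: subring_of_nat subring_uminus)

lemma subring_power: "a \<in> K \<Longrightarrow> a ^ n \<in> K"
  by (induction n) (auto intro: subring_mult subring_1)

lemma polys_over_add: "f \<in> polys_over K \<Longrightarrow> g \<in> polys_over K \<Longrightarrow> f + g \<in> polys_over K"
  by (auto simp: polys_over_def intro: subring_add)

lemma polys_over_diff: "f \<in> polys_over K \<Longrightarrow> g \<in> polys_over K \<Longrightarrow> f - g \<in> polys_over K"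
  by (auto simp: polys_over_def intro: subring_diff)

lemma polys_over_mult: "f \<in> polys_over K \<Longrightarrow> g \<in> polys_over K \<Longrightarrow> f * g \<in> polys_over K"
  by (auto simp: polys_over_def coeff_mult intro!: subring_sum subring_mult)

lemma polys_over_const: "c \<in> K \<Longrightarrow> [:c:] \<in> polys_over K"
  by (auto simp: polys_over_def coeff_pCons split: nat.splits intro: subring_0)

lemma polys_over_of_nat: "of_nat n \<in> polys_over K"
  unfolding of_nat_poly by (rule polys_over_const[OF subring_of_nat])

lemma polys_over_monom: "c \<in> K \<Longrightarrow> monom c n \<in> polys_over K"
  by (auto simp: polys_over_def intro: subring_0)

lemma polys_over_power: "f \<in> polys_over K \<Longrightarrow> f ^ n \<in> polys_over K"
  by (induction n) (auto intro: polys_over_mult polys_over_of_nat[of 1, simplified])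

lemma polys_over_sum: "(\<And>i. i \<in> A \<Longrightarrow> f i \<in> polys_over K) \<Longrightarrow> sum f A \<in> polys_over K"
  by (induction A rule: infinite_finite_induct) (auto intro: polys_over_add polys_over_of_nat[of 0, simplified])

lemma polys_over_x_minus_1: "[:-1, 1:] \<in> polys_over K"
  by (auto simp: polys_over_def coeff_pCons split: nat.splits intro: subring_0 subring_1 subring_uminus)

lemma poly_polys_over: "f \<in> polys_over K \<Longrightarrow> x \<in> K \<Longrightarrow> poly f x \<in> K"
  unfolding poly_altdef polys_over_def
  by (auto intro!: subring_sum subring_mult subring_power)

end

lemma polys_over_monic_mult_cancel:
  fixes d w :: "'a::idom poly"
  assumes K: "is_subring K" and d: "d \<in> polys_over K" "lead_coeff d = 1"
    and dw: "d * w \<in> polys_over K"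
  shows "w \<in> polys_over K"
  using dw
proof (induction "degree w" arbitrary: w rule: less_induct)
  case less
  define m where "m = monom (lead_coeff w) (degree w)"
  have "lead_coeff w = lead_coeff (d * w)"
    using d(2) by (simp add: lead_coeff_mult)
  with less.prems have "lead_coeff w \<in> K"
    by (simp add: polys_over_def)
  then have m: "m \<in> polys_over K"
    unfolding m_def by (rule polys_over_monom[OF K])
  have "w - m \<in> polys_over K"
  proof (cases "w - m = 0")
    case True
    then show ?thesis using polys_over_of_nat[OF K, of 0] by simp
  next
    case False
    have "coeff (w - m) (degree w) = 0" and "degree (w - m) \<le> degree w"
      by (auto simp: m_def degree_diff_le degree_monom_le)
    then have "degree (w - m) < degree w"
      using False leading_coeff_0_iff le_neq_implies_less by metis
    moreover have "d * (w - m) \<in> polys_over K"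
      unfolding right_diff_distrib by (intro polys_over_diff[OF K] polys_over_mult[OF K] less.prems d m)
    ultimately show ?thesis by (rule less.hyps)
  qed
  then show ?case using polys_over_add[OF K _ m] by fastforce
qed

section \<open>Divisibility by p in K[x]\<close>

lemma cg_mod_prime_binomial:
  fixes p :: nat and K :: "'f::field set"
  assumes p: "prime p" and K: "is_subring K"
  obtains c where "c \<in> polys_over K" "cg_mod p = am1 ^ p + of_nat p * c"
proof
  define c :: "'f poly" where "c = (\<Sum>k<p. of_nat ((p choose k) div p) * am1 ^ k)"
  show "c \<in> polys_over K"
    unfolding c_def am1_def
    by (intro polys_over_sum polys_over_mult polys_over_of_nat polys_over_power polys_over_x_minus_1 K)
  have binomial: "of_nat (p choose k) * am1 ^ k
      = of_nat p * (of_nat ((p choose k) div p) * am1 ^ k) + (if k = 0 then am1 ^ k else 0 :: 'f poly)"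
    if "k \<in> {..<p}" for k
  proof (cases "k = 0")
    case True
    then show ?thesis using prime_gt_1_nat[OF p] by simp
  next
    case False
    then have "p dvd p choose k" using dvd_choose_prime[OF _ False _ p] that by simp
    then show ?thesis using False by (simp flip: of_nat_mult add: mult.assoc[symmetric])
  qed
  have "monom 1 p = (am1 + 1 :: 'f poly) ^ p"
    by (simp add: am1_def monom_altdef one_pCons)
  also have "\<dots> = (\<Sum>k<Suc p. of_nat (p choose k) * am1 ^ k)"
    by (simp add: binomial_ring lessThan_Suc_atMost)
  also have "\<dots> = am1 ^ p + (\<Sum>k<p. of_nat (p choose k) * am1 ^ k)"
    by simp
  also have "(\<Sum>k<p. of_nat (p choose k) * am1 ^ k :: 'f poly)
      = (\<Sum>k<p. of_nat p * (of_nat ((p choose k) div p) * am1 ^ k) + (if k = 0 then am1 ^ k else 0))"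
    by (rule sum.cong[OF refl binomial])
  also have "\<dots> = of_nat p * c + 1"
    using prime_gt_0_nat[OF p] by (simp add: sum.distrib c_def sum_distrib_left)
  finally show "cg_mod p = am1 ^ p + of_nat p * c"
    by (simp add: cg_mod_def)
qed

lemma lead_coeff_cg_mod: "0 < q \<Longrightarrow> lead_coeff (cg_mod q :: 'f::field poly) = 1"
  using lead_coeff_add_le[of "-1" "monom 1 q :: 'f poly"] by (simp add: cg_mod_def degree_monom_eq)

lemma cg_mod_polys_over: "is_subring K \<Longrightarrow> cg_mod q \<in> polys_over K"
  unfolding cg_mod_def by (intro polys_over_diff polys_over_monom polys_over_of_nat[of K 1, simplified] subring_1)

lemma poly_one_in_prime_multiple:
  fixes s1 s2 :: "'f::field_char_0 poly"
  assumes K: "is_subring K" and p: "prime p" and j: "j < p"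
    and s: "s1 \<in> polys_over K" "s2 \<in> polys_over K"
    and cong: "[s1 * am1 ^ j + of_nat p * s2 = 0] (mod cg_mod p)"
  obtains \<kappa> where "\<kappa> \<in> K" "poly s1 1 = of_nat p * \<kappa>"
proof -
  have am1: "am1 \<in> polys_over K" "lead_coeff (am1 ^ j) = 1"
    using polys_over_x_minus_1[OF K] by (simp_all add: am1_def lead_coeff_power)
  obtain c where c: "c \<in> polys_over K" and X: "cg_mod p = am1 ^ p + of_nat p * c"
    using cg_mod_prime_binomial[OF p K] .
  obtain w where w: "s1 * am1 ^ j + of_nat p * s2 = cg_mod p * w"
    using cong by (auto simp: cong_0_iff)
  have "cg_mod p * w \<in> polys_over K"
    unfolding w[symmetric] using am1 s
    by (intro polys_over_add[OF K] polys_over_mult[OF K] polys_over_power[OF K] polys_over_of_nat[OF K])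
  then have wK: "w \<in> polys_over K"
    using polys_over_monic_mult_cancel[OF K cg_mod_polys_over[OF K] lead_coeff_cg_mod] prime_gt_0_nat[OF p]
    by blast
  have "s1 * am1 ^ j = cg_mod p * w - of_nat p * s2"
    using w by (simp add: eq_diff_eq)
  then have split: "am1 ^ j * (s1 - am1 ^ (p - j) * w) = of_nat p * (c * w - s2)"
    using j unfolding X by (simp add: algebra_simps flip: power_add)
  moreover have "is_unit (of_nat p :: 'f poly)"
    using prime_gt_0_nat[OF p] by (simp add: of_nat_poly is_unit_const_poly_iff dvd_field_iff)
  ultimately have "am1 ^ j dvd c * w - s2"
    by (metis dvdI dvd_mult_unit_iff')
  then obtain r where r: "c * w - s2 = am1 ^ j * r" ..
  have "am1 ^ j * r \<in> polys_over K"
    unfolding r[symmetric] using c wK s by (intro polys_over_diff[OF K] polys_over_mult[OF K])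
  then have rK: "r \<in> polys_over K"
    using polys_over_monic_mult_cancel[OF K polys_over_power[OF K am1(1)] am1(2)] by blast
  have "am1 ^ j * (s1 - am1 ^ (p - j) * w) = am1 ^ j * (of_nat p * r)"
    using split r by (simp add: algebra_simps)
  then have "s1 - am1 ^ (p - j) * w = of_nat p * r"
    by (simp add: am1_def)
  then have "poly s1 1 = of_nat p * poly r 1"
    using j by (simp add: am1_def algebra_simps)
  then show thesis
    using that poly_polys_over[OF K rK subring_1[OF K]] by blast
qed

lemma prime_dvd_of_nat_eq_mult:
  fixes K :: "'a::comm_ring_1 set"
  assumes K: "is_subring K" and not_unit: "\<forall>\<kappa>\<in>K. of_nat p * \<kappa> \<noteq> 1" and p: "prime p"
    and \<kappa>: "\<kappa> \<in> K" "of_nat m = of_nat p * \<kappa>"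
  shows "p dvd m"
proof (rule ccontr)
  assume "\<not> p dvd m"
  then have "coprime (int m) (int p)"
    using p by (metis coprime_commute prime_imp_coprime coprime_int_iff)
  then obtain u v where "u * int m + v * int p = 1"
    using bezout_int[of "int m" "int p"] by auto
  then have "of_int u * of_nat m + of_int v * of_nat p = (1 :: 'a)"
    by (metis of_int_1 of_int_add of_int_mult of_int_of_nat_eq)
  then have "of_nat p * (of_int u * \<kappa> + of_int v) = 1"
    using \<kappa>(2) by (simp add: algebra_simps)
  moreover have "of_int u * \<kappa> + of_int v \<in> K"
    by (intro subring_add[OF K] subring_mult[OF K] subring_of_int[OF K] \<kappa>(1))
  ultimately show False
    using not_unit by blast
qed

section \<open>The coefficient rings Z_(p) and Z_p\<close>

lemma is_subring_Zloc:
  assumes p: "prime p"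
  shows "is_subring (Zloc p :: 'f::field_char_0 set)"
proof -
  have mem: "(of_int a / of_int b :: 'f) \<in> Zloc p" if "\<not> int p dvd b" for a b
    using that unfolding Zloc_def by blast
  show ?thesis
    unfolding is_subring_def
  proof (intro conjI ballI)
    show "1 \<in> (Zloc p :: 'f set)"
      using mem[of 1 1] prime_gt_1_nat[OF p] by simp
  next
    fix x y :: 'f
    assume "x \<in> Zloc p" "y \<in> Zloc p"
    then obtain a b c d where x: "x = of_int a / of_int b" "\<not> int p dvd b"
      and y: "y = of_int c / of_int d" "\<not> int p dvd d"
      unfolding Zloc_def by blast
    have bd: "\<not> int p dvd b * d"
      using x(2) y(2) p by (simp add: prime_dvd_mult_iff)
    have "(of_int b :: 'f) \<noteq> 0" "(of_int d :: 'f) \<noteq> 0"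
      using x(2) y(2) by auto
    then have eqs: "x - y = of_int (a * d - c * b) / of_int (b * d)" "x * y = of_int (a * c) / of_int (b * d)"
      unfolding x(1) y(1) by (simp_all add: field_simps)
    show "x - y \<in> Zloc p"
      unfolding eqs(1) by (rule mem[OF bd])
    show "x * y \<in> Zloc p"
      unfolding eqs(2) by (rule mem[OF bd])
  qed
qed

lemma Zloc_not_unit: "\<kappa> \<in> Zloc p \<Longrightarrow> of_nat p * \<kappa> \<noteq> (1 :: 'f::field_char_0)"
proof
  assume "\<kappa> \<in> Zloc p" and unit: "of_nat p * \<kappa> = (1 :: 'f)"
  then obtain a b where \<kappa>: "\<kappa> = of_int a / of_int b" and b: "\<not> int p dvd b"
    unfolding Zloc_def by blast
  then have "b \<noteq> 0"
    by auto
  then have "(of_int (int p * a) :: 'f) = of_int b"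
    using unit \<kappa> by (simp add: field_simps)
  then show False
    using b by (simp only: of_int_eq_iff) auto
qed

definition padic_of_nat :: "nat \<Rightarrow> nat \<Rightarrow> nat \<Rightarrow> int" where
  "padic_of_nat p m = (\<lambda>n. int m mod int p ^ n)"

lemma pone_eq_padic_of_nat: "pone p = padic_of_nat p 1"
  by (simp add: padic_of_nat_def pone_def)

lemma padic_ints_memI:
  assumes "0 < p" and "\<And>n. x (Suc n) mod int p ^ n = x n mod int p ^ n"
  shows "(\<lambda>n. x n mod int p ^ n) \<in> padic_ints p"
proof -
  have "x (Suc n) mod int p ^ Suc n mod int p ^ n = x n mod int p ^ n" for n
    using assms(2)[of n] by (simp add: mod_mod_cancel)
  then show ?thesis
    using assms(1) by (simp add: padic_ints_def)
qed

lemma padic_of_nat_mem: "0 < p \<Longrightarrow> padic_of_nat p m \<in> padic_ints p"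
  unfolding padic_of_nat_def by (rule padic_ints_memI) simp_all

lemma padd_mem:
  assumes "0 < p" "x \<in> padic_ints p" "y \<in> padic_ints p"
  shows "padd p x y \<in> padic_ints p"
  unfolding padd_def
proof (rule padic_ints_memI[OF assms(1)])
  fix n
  have "x (Suc n) mod int p ^ n = x n" "y (Suc n) mod int p ^ n = y n"
    using assms(2,3) by (simp_all add: padic_ints_def)
  then show "(x (Suc n) + y (Suc n)) mod int p ^ n = (x n + y n) mod int p ^ n"
    by (metis mod_add_eq)
qed

lemma pmult_mem:
  assumes "0 < p" "x \<in> padic_ints p" "y \<in> padic_ints p"
  shows "pmult p x y \<in> padic_ints p"
  unfolding pmult_def
proof (rule padic_ints_memI[OF assms(1)])
  fix n
  have "x (Suc n) mod int p ^ n = x n" "y (Suc n) mod int p ^ n = y n"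
    using assms(2,3) by (simp_all add: padic_ints_def)
  then show "(x (Suc n) * y (Suc n)) mod int p ^ n = (x n * y n) mod int p ^ n"
    by (metis mod_mult_eq)
qed

lemma padic_hom_of_nat:
  assumes p: "0 < p" and one: "\<iota> (pone p) = 1"
    and add: "\<forall>x\<in>padic_ints p. \<forall>y\<in>padic_ints p. \<iota> (padd p x y) = \<iota> x + \<iota> y"
  shows "\<iota> (padic_of_nat p m) = (of_nat m :: 'a::ring_1)"
proof (induction m)
  case 0
  have "padd p (padic_of_nat p 0) (padic_of_nat p 0) = padic_of_nat p 0"
    by (simp add: padd_def padic_of_nat_def)
  moreover have "\<iota> (padd p (padic_of_nat p 0) (padic_of_nat p 0))
      = \<iota> (padic_of_nat p 0) + \<iota> (padic_of_nat p 0)"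
    using add padic_of_nat_mem[OF p] by blast
  ultimately show ?case
    by simp
next
  case (Suc m)
  have "padd p (padic_of_nat p m) (padic_of_nat p 1) = padic_of_nat p (Suc m)"
    by (simp add: padd_def padic_of_nat_def fun_eq_iff mod_add_eq add.commute)
  moreover have "\<iota> (padd p (padic_of_nat p m) (padic_of_nat p 1))
      = \<iota> (padic_of_nat p m) + \<iota> (padic_of_nat p 1)"
    using add padic_of_nat_mem[OF p] by blast
  ultimately show ?case
    using Suc one by (simp add: pone_eq_padic_of_nat)
qed

lemma is_Zp_in_subring:
  assumes p: "0 < p" and Zp: "is_Zp_in p K"
  shows "is_subring K"
proof -
  obtain \<iota> where img: "\<iota> ` padic_ints p = K" and one: "\<iota> (pone p) = 1"
    and hom: "\<forall>x\<in>padic_ints p. \<forall>y\<in>padic_ints p.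
      \<iota> (padd p x y) = \<iota> x + \<iota> y \<and> \<iota> (pmult p x y) = \<iota> x * \<iota> y"
    using Zp unfolding is_Zp_in_def by blast
  have zero: "\<iota> (padic_of_nat p 0) = 0"
    using padic_hom_of_nat[of p \<iota> 0] p one hom by simp
  define neg where "neg y = (\<lambda>n. (- y n) mod int p ^ n)" for y :: "nat \<Rightarrow> int"
  have neg: "neg y \<in> padic_ints p" "\<iota> (neg y) = - \<iota> y" if y: "y \<in> padic_ints p" for y
  proof -
    show neg_mem: "neg y \<in> padic_ints p"
      unfolding neg_def
    proof (rule padic_ints_memI[OF p])
      fix n
      have "y (Suc n) mod int p ^ n = y n"
        using y by (simp add: padic_ints_def)
      then show "- y (Suc n) mod int p ^ n = - y n mod int p ^ n"
        by (metis mod_minus_eq)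
    qed
    have "padd p y (neg y) = padic_of_nat p 0"
      by (simp add: padd_def neg_def padic_of_nat_def fun_eq_iff mod_add_right_eq)
    moreover have "\<iota> (padd p y (neg y)) = \<iota> y + \<iota> (neg y)"
      using hom y neg_mem by blast
    ultimately have "\<iota> y + \<iota> (neg y) = 0"
      using zero by simp
    then show "\<iota> (neg y) = - \<iota> y"
      by (simp add: eq_neg_iff_add_eq_0 add.commute)
  qed
  show ?thesis
    unfolding is_subring_def
  proof (intro conjI ballI)
    show "1 \<in> K"
      using one padic_of_nat_mem[OF p, of 1] img by (force simp: pone_eq_padic_of_nat)
  next
    fix a b
    assume "a \<in> K" "b \<in> K"
    then obtain x y where xy: "x \<in> padic_ints p" "y \<in> padic_ints p" "a = \<iota> x" "b = \<iota> y"
      using img by auto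
    then have "a - b = \<iota> (padd p x (neg y))" "a * b = \<iota> (pmult p x y)"
      using hom neg by auto
    then show "a - b \<in> K" "a * b \<in> K"
      using xy img padd_mem[OF p] pmult_mem[OF p] neg(1) by auto
  qed
qed

lemma is_Zp_in_not_unit:
  assumes p: "1 < p" and Zp: "is_Zp_in p K" and \<kappa>: "\<kappa> \<in> K"
  shows "of_nat p * \<kappa> \<noteq> 1"
proof
  assume unit: "of_nat p * \<kappa> = 1"
  obtain \<iota> where inj: "inj_on \<iota> (padic_ints p)" and img: "\<iota> ` padic_ints p = K"
    and one: "\<iota> (pone p) = 1"
    and hom: "\<forall>x\<in>padic_ints p. \<forall>y\<in>padic_ints p.
      \<iota> (padd p x y) = \<iota> x + \<iota> y \<and> \<iota> (pmult p x y) = \<iota> x * \<iota> y"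
    using Zp unfolding is_Zp_in_def by blast
  obtain w where w: "w \<in> padic_ints p" "\<kappa> = \<iota> w"
    using \<kappa> img by auto
  have p0: "0 < p" using p by simp
  have "\<iota> (pmult p (padic_of_nat p p) w) = \<iota> (pone p)"
    using hom padic_hom_of_nat[of p \<iota> p] p0 one padic_of_nat_mem[OF p0] w unit by simp
  moreover have "pone p \<in> padic_ints p"
    using padic_of_nat_mem[OF p0, of 1] by (simp add: pone_eq_padic_of_nat)
  ultimately have "pmult p (padic_of_nat p p) w = pone p"
    using inj pmult_mem[OF p0 padic_of_nat_mem[OF p0] w(1)] by (meson inj_on_def)
  then have "pmult p (padic_of_nat p p) w 1 = pone p 1"
    by simp
  then show False
    using p by (simp add: pmult_def padic_of_nat_def pone_def)
qed

lemma Zloc_or_Zp_subring_not_unit: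
  fixes K :: "'f::field_char_0 set"
  assumes p: "prime p" and K: "K = Zloc p \<or> is_Zp_in p K"
  shows "is_subring K" and "\<forall>\<kappa>\<in>K. of_nat p * \<kappa> \<noteq> 1"
  using K is_subring_Zloc[OF p] Zloc_not_unit is_Zp_in_subring[OF prime_gt_0_nat[OF p]]
    is_Zp_in_not_unit[OF prime_gt_1_nat[OF p]] by blast+

section \<open>The group ring and the crystallographic group\<close>

lemma cg_ring_red: "red q y \<in> cg_ring q"
  by (simp add: cg_ring_def red_def)

lemma cg_ring_add: "a \<in> cg_ring q \<Longrightarrow> b \<in> cg_ring q \<Longrightarrow> a + b \<in> cg_ring q"
  by (simp add: cg_ring_def red_def poly_mod_add_left)

lemma cg_ring_smult: "a \<in> cg_ring q \<Longrightarrow> smult c a \<in> cg_ring q"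
  by (simp add: cg_ring_def red_def mod_smult_left)

lemma cg_ring_sum: "(\<And>i. i \<in> A \<Longrightarrow> f i \<in> cg_ring q) \<Longrightarrow> sum f A \<in> cg_ring q"
  by (induction A rule: infinite_finite_induct) (auto simp: cg_ring_def red_def poly_mod_add_left)

lemma cg_ring_cong_0: "y \<in> cg_ring q \<Longrightarrow> [y = 0] (mod cg_mod q) \<Longrightarrow> y = 0"
  by (simp add: cg_ring_def red_def cong_def)

lemma F_span_subset:
  assumes "M \<subseteq> cg_ring q \<times> cg_ring q"
  shows "F_span M \<subseteq> cg_ring q \<times> cg_ring q"
proof
  fix x
  assume "x \<in> F_span M"
  then obtain S c where S: "S \<subseteq> M" and x: "x = (\<Sum>u\<in>S. psmult (c u) u)"
    unfolding F_span_def by blast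
  have "fst x = (\<Sum>u\<in>S. smult (c u) (fst u))" "snd x = (\<Sum>u\<in>S. smult (c u) (snd u))"
    unfolding x by (simp_all add: psmult_def fst_sum snd_sum)
  moreover have "fst u \<in> cg_ring q" "snd u \<in> cg_ring q" if "u \<in> S" for u
    using that S assms by auto
  ultimately show "x \<in> cg_ring q \<times> cg_ring q"
    by (simp add: mem_Times_iff cg_ring_sum cg_ring_smult)
qed

lemma Crys_carrier_reduced:
  assumes "M \<subseteq> cg_ring q \<times> cg_ring q" and "(k, x) \<in> carrier (Crys q M T)"
  shows "x \<in> cg_ring q \<times> cg_ring q"
  using assms F_span_subset[OF assms(1)] by (auto simp: Crys_def)

lemma poly_1_cong:
  assumes "[f = g] (mod cg_mod q)"
  shows "poly f 1 = poly g 1"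
proof -
  obtain h where "f - g = cg_mod q * h"
    using assms by (auto simp: cong_iff_dvd_diff)
  then have "poly (f - g) 1 = 0"
    by (simp add: cg_mod_def poly_monom)
  then show ?thesis
    by simp
qed

lemma monom_mult_cong_1: "[monom 1 (m * k) = 1] (mod cg_mod m)"
proof -
  have "[monom 1 m = 1] (mod cg_mod m)"
    by (simp add: cong_iff_dvd_diff cg_mod_def)
  then show ?thesis
    using cong_pow[of "monom 1 m" 1 "cg_mod m" k] by (simp add: monom_power)
qed

lemma cg_mod_dvd_cg_mod_mult: "cg_mod m dvd cg_mod (m * l)"
  using monom_mult_cong_1[of m l] by (simp add: cong_iff_dvd_diff cg_mod_def)

lemma sum_monom_cong_card: "[(\<Sum>i\<in>A. monom 1 (m * f i)) = of_nat (card A)] (mod cg_mod m)"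
proof -
  have "[(\<Sum>i\<in>A. monom 1 (m * f i)) = (\<Sum>i\<in>A. 1)] (mod cg_mod m)"
    by (rule cong_sum) (rule monom_mult_cong_1)
  then show ?thesis
    by simp
qed

lemma Phi_cong: "[Phi p m = of_nat p] (mod cg_mod m)"
  using sum_monom_cong_card[where A = "{..<p}" and m = m and f = "\<lambda>i. i"] by (simp add: Phi_def)

lemma poly_Phi_1: "poly (Phi p m) 1 = of_nat p"
  by (simp add: Phi_def poly_sum poly_monom)

lemma geometric_sum_mult_cong_0_cancel:
  fixes y :: "'f::field_char_0 poly"
  assumes cong: "[(\<Sum>i<n. monom 1 (m * t * i)) * y = 0] (mod cg_mod (m * l))" and n: "0 < n"
  shows "[y = 0] (mod cg_mod m)"
proof -
  have "[(\<Sum>i<n. monom 1 (m * t * i)) * y = of_nat n * y] (mod cg_mod m)"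
    using cong_mult[OF sum_monom_cong_card[where A = "{..<n}" and m = m and f = "\<lambda>i. t * i"] cong_refl[of y]]
    by (simp add: mult.assoc)
  moreover have "[(\<Sum>i<n. monom 1 (m * t * i)) * y = 0] (mod cg_mod m)"
    using cong cg_mod_dvd_cg_mod_mult by (rule cong_dvd_modulus)
  ultimately have "cg_mod m dvd of_nat n * y"
    by (metis cong_0_iff cong_sym cong_trans)
  moreover have "is_unit (of_nat n :: 'f poly)"
    using n by (simp add: of_nat_poly is_unit_const_poly_iff dvd_field_iff)
  ultimately show ?thesis
    by (simp add: cong_0_iff dvd_mult_unit_iff')
qed

lemma coset_eqE:
  assumes "0 \<in> M" "coset M x = coset M y"
  obtains u where "u \<in> M" "x = y - u"
proof -
  have "y \<in> coset M x"
    using assms by (force simp: coset_def)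
  then obtain u where "u \<in> M" "y = x + u"
    by (auto simp: coset_def)
  then show thesis
    using that by (simp add: algebra_simps)
qed

lemma Crys_nat_pow:
  assumes x: "x \<in> cg_ring q \<times> cg_ring q"
  shows "(k, x) [^]\<^bsub>Crys q M T\<^esub> n = (n * k mod q, pmul2 q (\<Sum>i<n. monom 1 (k * i)) x)"
proof (induction n)
  case 0
  show ?case
    by (simp add: nat_pow_def Crys_def pmul2_def red_def)
next
  case (Suc n)
  define S where "S = (\<Sum>i<n. monom 1 (k * i) :: 'a poly)"
  have step: "red q (monom 1 k * red q (S * y)) + y = red q ((1 + monom 1 k * S) * y)"
    if "y \<in> cg_ring q" for y
    using that by (simp add: cg_ring_def red_def distrib_right mod_mult_right_eq mult.assoc poly_mod_add_left)
  have "(k, x) [^]\<^bsub>Crys q M T\<^esub> Suc n = (n * k mod q, pmul2 q S x) \<otimes>\<^bsub>Crys q M T\<^esub> (k, x)"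
    using Suc.IH by (simp add: nat_pow_def S_def)
  also have "\<dots> = (Suc n * k mod q, pmul2 q (1 + monom 1 k * S) x)"
  proof -
    have "(n * k mod q + k) mod q = Suc n * k mod q"
      by (simp add: mod_add_right_eq add.commute)
    then show ?thesis
      using x by (cases x) (simp add: Crys_def act_def pmul2_def step)
  qed
  also have "1 + monom 1 k * S = (\<Sum>i<Suc n. monom 1 (k * i))"
    unfolding S_def sum.lessThan_Suc_shift by (simp add: sum_distrib_left mult_monom)
  finally show ?case .
qed

lemma Crys_nat_pow_eq_one_cong:
  assumes x: "x \<in> cg_ring q \<times> cg_ring q"
    and pow: "(k, x) [^]\<^bsub>Crys q M T\<^esub> n = \<one>\<^bsub>Crys q M T\<^esub>"
  shows "[(\<Sum>i<n. monom 1 (k * i)) * fst x = 0] (mod cg_mod q)"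
    and "[(\<Sum>i<n. monom 1 (k * i)) * snd x = 0] (mod cg_mod q)"
  using pow unfolding Crys_nat_pow[OF x] by (simp_all add: Crys_def pmul2_def red_def cong_def)

lemma Crys_torsion_translation_zero:
  fixes x :: "'f::field_char_0 poly \<times> 'f poly" and n :: nat
  assumes x: "x \<in> cg_ring q \<times> cg_ring q"
    and pow: "(0, x) [^]\<^bsub>Crys q M T\<^esub> n = \<one>\<^bsub>Crys q M T\<^esub>"
    and n: "0 < n"
  shows "x = 0"
proof -
  note torsion = Crys_nat_pow_eq_one_cong[OF x pow]
  have "[fst x = 0] (mod cg_mod q)" "[snd x = 0] (mod cg_mod q)"
    using torsion geometric_sum_mult_cong_0_cancel[where m = q and t = 0 and l = 1 and n = n] n
    by simp_all
  then show ?thesis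
    using x cg_ring_cong_0 by (auto simp: prod_eq_iff)
qed

section \<open>Torsion in Crys(C_p^2; U_j; f_j)\<close>

lemma U_mod_subset: "U_mod p K j \<subseteq> cg_ring (p^2) \<times> cg_ring (p^2)"
proof
  fix u
  assume "u \<in> U_mod p K j"
  then obtain r1 r2 where "u = pmul2 (p^2) r1 (gen1 p j) + pmul2 (p^2) r2 (gen2 p)"
    unfolding U_mod_def by blast
  then show "u \<in> cg_ring (p^2) \<times> cg_ring (p^2)"
    by (auto simp: pmul2_def cg_ring_red intro!: cg_ring_add)
qed

lemma zero_in_U_mod: "is_subring K \<Longrightarrow> 0 \<in> U_mod p K j"
  unfolding U_mod_def cg_ringK_def
  by (rule CollectI, rule exI[of _ 0], rule exI[of _ 0])
     (simp add: pmul2_def cg_ring_def red_def subring_0 zero_prod_def)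

lemma Crys_U_carrierE:
  fixes K :: "'f::field_char_0 set"
  assumes K: "is_subring K" and p: "0 < p"
    and z: "(k, x) \<in> carrier (Crys (p^2) (U_mod p K j) (fj_cocycle p K j))"
  obtains r1 r2 where "r1 \<in> polys_over K" "r2 \<in> polys_over K"
    "poly (fst x) 1 = of_nat k - of_nat p * poly r1 1"
    "[snd x = - (r1 * am1 ^ j + r2 * Phi p p)] (mod cg_mod (p^2))"
proof -
  define S :: "'f poly" where "S = (\<Sum>i<k. monom 1 i)"
  define t where "t = pmul2 (p^2) S (psmult (1 / of_nat (p^2)) (red (p^2) (Phi p 1 * Phi p p), 0))"
  have "coset (U_mod p K j) x = coset (U_mod p K j) t"
    using z by (simp add: Crys_def fj_cocycle_def t_def S_def)
  then obtain u where "u \<in> U_mod p K j" and x: "x = t - u"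
    using coset_eqE zero_in_U_mod[OF K] by metis
  then obtain r1 r2 where r: "r1 \<in> cg_ringK (p^2) K" "r2 \<in> cg_ringK (p^2) K"
    and u: "u = pmul2 (p^2) r1 (gen1 p j) + pmul2 (p^2) r2 (gen2 p)"
    unfolding U_mod_def by blast
  have "[fst x = S * smult (1 / of_nat (p^2)) (Phi p 1 * Phi p p)
      - (r1 * (am1 ^ (j+1) + Phi p 1) + r2 * (am1 * Phi p p))] (mod cg_mod (p^2))"
    unfolding x u t_def
    by (simp add: pmul2_def psmult_def gen1_def gen2_def red_def cong_def mod_simps
        mod_smult_left[symmetric] poly_mod_add_left[symmetric])
  then have "poly (fst x) 1 = of_nat k - of_nat p * poly r1 1"
    using p by (auto dest!: poly_1_cong simp: S_def poly_sum poly_monom poly_Phi_1 am1_def power2_eq_square)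
  moreover have "[snd x = - (r1 * am1 ^ j + r2 * Phi p p)] (mod cg_mod (p^2))"
    unfolding x u t_def
    by (simp add: pmul2_def psmult_def gen1_def gen2_def red_def cong_def mod_simps
        poly_mod_add_left[symmetric] del: poly_mod_minus_left)
  moreover have "r1 \<in> polys_over K" "r2 \<in> polys_over K"
    using r by (simp_all add: cg_ringK_def polys_over_def)
  ultimately show thesis
    using that by blast
qed

lemma U_torsion_prime_multiple:
  fixes K :: "'f::field_char_0 set"
  assumes K: "is_subring K" and p: "prime p" and j: "j < p"
    and r: "r1 \<in> polys_over K" "r2 \<in> polys_over K"
    and y: "[y = - (r1 * am1 ^ j + r2 * Phi p p)] (mod cg_mod (p^2))"
    and torsion: "[(\<Sum>i<n. monom 1 (p * t * i)) * y = 0] (mod cg_mod (p^2))" and n: "0 < n"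
  obtains \<kappa> where "\<kappa> \<in> K" "poly r1 1 = of_nat p * \<kappa>"
proof -
  define e where "e = r1 * am1 ^ j + of_nat p * r2"
  have dvd: "cg_mod p dvd cg_mod (p^2)"
    using cg_mod_dvd_cg_mod_mult[of p p] by (simp add: power2_eq_square)
  have "[y = 0] (mod cg_mod p)"
    using geometric_sum_mult_cong_0_cancel[where m = p and l = p and t = t and n = n and y = y] torsion n
    by (simp add: power2_eq_square)
  moreover have "[y = - (r1 * am1 ^ j + r2 * Phi p p)] (mod cg_mod p)"
    using y dvd by (rule cong_dvd_modulus)
  moreover have "[- (r1 * am1 ^ j + r2 * Phi p p) = - e] (mod cg_mod p)"
    unfolding e_def mult.commute[of "of_nat p"] by (intro cong_uminus cong_add cong_refl cong_mult Phi_cong)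
  ultimately have "[- e = 0] (mod cg_mod p)"
    using cong_sym cong_trans by metis
  then have "[e = 0] (mod cg_mod p)"
    by (simp add: cong_0_iff)
  then show thesis
    using poly_one_in_prime_multiple[OF K p j r] that unfolding e_def by blast
qed

lemma U_torsion_rotation_zero:
  fixes K :: "'f::field_char_0 set" and n :: nat
  assumes K: "is_subring K" and not_unit: "\<forall>\<kappa>\<in>K. of_nat p * \<kappa> \<noteq> 1"
    and p: "prime p" and j: "j < p"
    and z: "(k, x) \<in> carrier (Crys (p^2) (U_mod p K j) (fj_cocycle p K j))"
    and pow: "(k, x) [^]\<^bsub>Crys (p^2) (U_mod p K j) (fj_cocycle p K j)\<^esub> n
      = \<one>\<^bsub>Crys (p^2) (U_mod p K j) (fj_cocycle p K j)\<^esub>"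
    and n: "0 < n"
  shows "k = 0"
proof -
  have p0: "0 < p"
    using prime_gt_0_nat[OF p] .
  have k: "k < p^2"
    using z by (simp add: Crys_def)
  obtain r1 r2 where r: "r1 \<in> polys_over K" "r2 \<in> polys_over K"
    and x1: "poly (fst x) 1 = of_nat k - of_nat p * poly r1 1"
    and x2: "[snd x = - (r1 * am1 ^ j + r2 * Phi p p)] (mod cg_mod (p^2))"
    using Crys_U_carrierE[OF K p0 z] .
  note torsion = Crys_nat_pow_eq_one_cong[OF Crys_carrier_reduced[OF U_mod_subset z] pow]
  have "poly (fst x) 1 = 0"
    using poly_1_cong[OF torsion(1)] n by (simp add: poly_sum poly_monom)
  then have k_eq: "of_nat k = of_nat p * poly r1 1"
    using x1 by simp
  have r1_1: "poly r1 1 \<in> K"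
    using poly_polys_over[OF K r(1) subring_1[OF K]] .
  obtain t where t: "k = p * t"
    using prime_dvd_of_nat_eq_mult[OF K not_unit p r1_1 k_eq] by blast
  have "t = 0"
  proof (rule ccontr)
    assume "t \<noteq> 0"
    obtain \<kappa> where "\<kappa> \<in> K" "poly r1 1 = of_nat p * \<kappa>"
      using U_torsion_prime_multiple[OF K p j r x2 torsion(2)[unfolded t] n] .
    then have "p dvd t"
      using k_eq p0 by (intro prime_dvd_of_nat_eq_mult[OF K not_unit p]) (simp_all add: t)
    moreover have "t < p"
      using k p0 by (simp add: t power2_eq_square)
    ultimately show False
      using \<open>t \<noteq> 0\<close> by (auto dest: dvd_imp_le)
  qed
  then show ?thesis
    by (simp add: t)
qed

theorem lemma10:
  fixes p j :: nat and K :: "'f::field_char_0 set"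
  assumes "prime p" and "p > 2"
    and "K = Zloc p \<or> is_Zp_in p K"
    and "1 \<le> j" and "j \<le> p - 2"
  shows "torsion_free (Crys (p^2) (U_mod p K j) (fj_cocycle p K j))"
  unfolding torsion_free_def
proof (intro ballI allI impI)
  let ?G = "Crys (p^2) (U_mod p K j) (fj_cocycle p K j)"
  fix z and n :: nat
  assume z: "z \<in> carrier ?G" and n: "0 < n" and pow: "z [^]\<^bsub>?G\<^esub> n = \<one>\<^bsub>?G\<^esub>"
  obtain k x where z_eq: "z = (k, x)"
    by (cases z)
  have "j < p"
    using assms(2,5) by simp
  then have "k = 0"
    using U_torsion_rotation_zero[OF Zloc_or_Zp_subring_not_unit[OF assms(1,3)] assms(1)] z pow n
    by (simp add: z_eq)
  moreover have "x \<in> cg_ring (p^2) \<times> cg_ring (p^2)"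
    using Crys_carrier_reduced[OF U_mod_subset] z by (simp add: z_eq)
  ultimately have "x = 0"
    using Crys_torsion_translation_zero n pow by (simp add: z_eq)
  then show "z = \<one>\<^bsub>?G\<^esub>"
    using \<open>k = 0\<close> by (simp add: z_eq Crys_def zero_prod_def)
qed

end
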